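(* Let $s\geq 2$ and suppose $G_{(s,0)}$ acts faithfully and transitively on a set of $n$ points, and that the translation subgroup $T=\langle u,v\rangle$ has exactly $m=3$ orbits, each of size $k$ (so $n=3k$). Then $k=ds$ for some positive divisor $d$ of $s$.
   Context: $G_{(s,0)}$ is the group of the toroidal hypermap $(3,3,3)_{(s,0)}$: the Coxeter group $[3,3,3]=\langle\rho_0,\rho_1,\rho_2\mid \rho_i^2=1,\ (\rho_i\rho_j)^3=1\ (i\neq j)\rangle$ factored by $(\rho_0\rho_1\rho_2\rho_1)^s$. Here $u=\rho_0\rho_1\rho_2\rho_1$ and $v=\rho_1 u\rho_1=\rho_1\rho_0\rho_1\rho_2$; $T=\langle u,v\rangle$ is a normal abelian subgroup of order $s^2$, so its orbits are blocks of equal size. *)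

theory Defs
  imports Main
begin

text \<open>Words in the generators rho_0, rho_1, rho_2 are lists of letters 0,1,2.
  Since all generators are involutions, the inverse of a word is its reverse,
  so the group G_(s,0) is the quotient of the free monoid on {0,1,2} by the
  congruence generated by the defining relations.\<close>

inductive wequiv :: "nat \<Rightarrow> nat list \<Rightarrow> nat list \<Rightarrow> bool" for s :: nat where
  wrefl: "wequiv s w w"
| wsym: "wequiv s a b \<Longrightarrow> wequiv s b a"
| wtrans: "wequiv s a b \<Longrightarrow> wequiv s b c \<Longrightarrow> wequiv s a c"
| wcong: "wequiv s a b \<Longrightarrow> wequiv s (x @ a @ y) (x @ b @ y)"
| rel_inv: "i < 3 \<Longrightarrow> wequiv s [i, i] []"
| rel_braid: "i < 3 \<Longrightarrow> j < 3 \<Longrightarrow> i \<noteq> j \<Longrightarrow> wequiv s [i, j, i, j, i, j] []"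
| rel_s: "wequiv s (concat (replicate s [0, 1, 2, 1])) []"

definition gen_word :: "nat list \<Rightarrow> bool" where
  "gen_word w \<longleftrightarrow> set w \<subseteq> {0, 1, 2}"

fun wact :: "(nat \<Rightarrow> 'a \<Rightarrow> 'a) \<Rightarrow> nat list \<Rightarrow> 'a \<Rightarrow> 'a" where
  "wact r [] = id"
| "wact r (i # w) = r i \<circ> wact r w"

definition faithful_action :: "nat \<Rightarrow> (nat \<Rightarrow> 'a \<Rightarrow> 'a) \<Rightarrow> 'a set \<Rightarrow> bool" where
  "faithful_action s r X \<longleftrightarrow>
     (\<forall>i<3. bij_betw (r i) X X) \<and>
     (\<forall>w1 w2. gen_word w1 \<longrightarrow> gen_word w2 \<longrightarrow>
        ((\<forall>x\<in>X. wact r w1 x = wact r w2 x) \<longleftrightarrow> wequiv s w1 w2))"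

definition transitive_action :: "(nat \<Rightarrow> 'a \<Rightarrow> 'a) \<Rightarrow> 'a set \<Rightarrow> bool" where
  "transitive_action r X \<longleftrightarrow> (\<forall>x\<in>X. \<forall>y\<in>X. \<exists>w. gen_word w \<and> wact r w x = y)"

definition u_word :: "nat list" where "u_word = [0, 1, 2, 1]"
definition v_word :: "nat list" where "v_word = [1, 0, 1, 2]"

inductive_set T_words :: "nat list set" where
  "[] \<in> T_words"
| "w \<in> T_words \<Longrightarrow> u_word @ w \<in> T_words"
| "w \<in> T_words \<Longrightarrow> v_word @ w \<in> T_words"
| "w \<in> T_words \<Longrightarrow> rev u_word @ w \<in> T_words"
| "w \<in> T_words \<Longrightarrow> rev v_word @ w \<in> T_words"

definition T_orbit :: "(nat \<Rightarrow> 'a \<Rightarrow> 'a) \<Rightarrow> 'a \<Rightarrow> 'a set" where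
  "T_orbit r x = {wact r w x | w. w \<in> T_words}"

end

theory Submission
  imports Defs "HOL-Combinatorics.Orbits"
begin

(*
  The translations u^a v^b form an abelian group which acts on every T-orbit O, and
  u^s = v^s = 1.  Orbit-stabiliser for the map (a, b) \<mapsto> u^a v^b x from (Z/s)^2 onto O
  shows that k = |O| divides s^2.  The u-cycles partition O and are carried onto each
  other by translations, so they all have the same length, which therefore divides k;
  hence u^k, and with it u^(k mod s), fixes every point of X.  By faithfulness
  u^(k mod s) = 1 in G_(s,0), while in the reflection representation of G_(s,0) on
  (Z/s)^3 the element u is a translation of order s; so s divides k, and k = d s with
  d s | s^2 gives d | s.
*)

lemma dvd_minus_mod_add:
  assumes "0 < (n::nat)"
  shows "n dvd n - a mod n + a"
proof -
  have "n - a mod n + a = n + (a - a mod n)"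
    using mod_less_divisor[OF assms, of a] mod_less_eq_dividend[of a n] by linarith
  then show ?thesis by (simp only:) (rule dvd_add[OF dvd_refl dvd_minus_mod])
qed

lemma bij_betw_add_mod:
  assumes "0 < (n::nat)"
  shows "bij_betw (\<lambda>a. (a + c) mod n) {..<n} {..<n}"
proof -
  have undo: "((a + c) mod n + (n - c mod n)) mod n = a mod n" for a
  proof -
    have "((a + c) mod n + (n - c mod n)) mod n = (a + c + (n - c mod n)) mod n"
      by (rule mod_add_left_eq)
    also have "\<dots> = (a + (n - c mod n + c)) mod n"
      by (simp only: ac_simps)
    also have "\<dots> = a mod n"
      using dvd_minus_mod_add[OF assms, of c]
      by (metis add.right_neutral mod_add_right_eq dvd_imp_mod_0)
    finally show ?thesis .
  qed
  have "inj_on (\<lambda>a. (a + c) mod n) {..<n}"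
  proof (rule inj_onI)
    fix a b assume "a \<in> {..<n}" "b \<in> {..<n}" "(a + c) mod n = (b + c) mod n"
    then show "a = b" using undo[of a] undo[of b] by simp
  qed
  then show ?thesis
    using assms by (simp add: bij_betw_def endo_inj_surj image_subsetI)
qed

lemma funpow_card_orbit:
  assumes "x \<in> orbit f x"
  shows "(f ^^ card (orbit f x)) x = x"
proof -
  have "card (orbit f x) = funpow_dist1 f x x"
    using orbit_conv_funpow_dist1[OF assms] inj_on_funpow_dist1[OF assms]
    by (simp add: card_image)
  then show ?thesis using funpow_dist1_prop[OF assms] by simp
qed

lemma orbit_subset_if_invariant:
  assumes "f ` S \<subseteq> S" "y \<in> S"
  shows "orbit f y \<subseteq> S"
proof
  fix z assume "z \<in> orbit f y"
  then show "z \<in> S" by induction (use assms in auto)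
qed

lemma orbit_image_commuting:
  assumes "f ` S \<subseteq> S" "y \<in> S" "\<And>w. w \<in> S \<Longrightarrow> g (f w) = f (g w)"
  shows "orbit f (g y) = g ` orbit f y"
proof -
  have "g ((f ^^ n) y) = (f ^^ n) (g y)" for n
  proof (induction n)
    case (Suc n)
    have "(f ^^ n) y \<in> S" using assms(1,2) by (induction n) auto
    then show ?case using Suc assms(3) by simp
  qed simp
  then have "{(f ^^ n) (g y) |n. 0 < n} = (\<lambda>n. g ((f ^^ n) y)) ` {n. 0 < n}"
    by auto
  then show ?thesis unfolding orbit_altdef by (auto simp: image_image)
qed

lemma card_orbit_dvd_card:
  assumes "finite S" "f ` S \<subseteq> S" and cyclic: "\<And>y. y \<in> S \<Longrightarrow> y \<in> orbit f y"
    and transitive: "\<And>y z. y \<in> S \<Longrightarrow> z \<in> S \<Longrightarrow> \<exists>g. g y = z \<and> (\<forall>w\<in>S. g (f w) = f (g w))"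
    and "x \<in> S"
  shows "card (orbit f x) dvd card S"
proof -
  have card_le: "card (orbit f z) \<le> card (orbit f y)" if yz: "y \<in> S" "z \<in> S" for y z
  proof -
    obtain g where "g y = z" "\<forall>w\<in>S. g (f w) = f (g w)"
      using transitive[OF yz] by blast
    then have "orbit f z = g ` orbit f y"
      using orbit_image_commuting[OF assms(2) \<open>y \<in> S\<close>] by blast
    moreover have "finite (orbit f y)"
      using orbit_subset_if_invariant[OF assms(2) \<open>y \<in> S\<close>] assms(1) by (rule finite_subset)
    ultimately show ?thesis by (simp add: card_image_le)
  qed
  define R where "R = {(y, z). y \<in> S \<and> z \<in> orbit f y}"
  have "equiv S R"
  proof (rule equivI)
    show "R \<subseteq> S \<times> S"
      using orbit_subset_if_invariant[OF assms(2)] by (auto simp: R_def)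
    show "refl_on S R"
      using cyclic orbit_subset_if_invariant[OF assms(2)] by (auto simp: R_def refl_on_def)
    show "sym R"
      using cyclic orbit_subset_if_invariant[OF assms(2)] by (auto simp: R_def sym_def intro: orbit_swap)
    show "trans R"
      by (auto simp: R_def trans_def intro: orbit_trans)
  qed
  moreover have "card (orbit f x) dvd card C" if "C \<in> S // R" for C
  proof -
    obtain y where "y \<in> S" "C = orbit f y"
      using \<open>C \<in> S // R\<close> by (auto simp: quotient_def R_def)
    then have "card C = card (orbit f x)"
      using card_le \<open>x \<in> S\<close> by (simp add: le_antisym)
    then show ?thesis by simp
  qed
  ultimately show ?thesis by (rule equiv_imp_dvd_card[OF assms(1)])
qed

lemma card_equivariant_image_dvd:
  assumes "finite D" "x \<in> \<phi> ` D"
    and transitive: "\<And>y. y \<in> \<phi> ` D \<Longrightarrow>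
      \<exists>\<tau> g. bij_betw \<tau> D D \<and> inj_on g (\<phi> ` D) \<and> g x = y \<and> (\<forall>p\<in>D. \<phi> (\<tau> p) = g (\<phi> p))"
  shows "card (\<phi> ` D) dvd card D"
proof -
  define fibre where "fibre y = {p \<in> D. \<phi> p = y}" for y
  have "card (fibre y) = card (fibre x)" if y: "y \<in> \<phi> ` D" for y
  proof -
    obtain \<tau> g where \<tau>: "bij_betw \<tau> D D" and g: "inj_on g (\<phi> ` D)" "g x = y"
      and equivariant: "\<forall>p\<in>D. \<phi> (\<tau> p) = g (\<phi> p)"
      using transitive[OF y] by blast
    have "\<tau> ` fibre x = fibre y"
    proof
      show "\<tau> ` fibre x \<subseteq> fibre y"
        using \<tau> equivariant g(2) by (auto simp: fibre_def bij_betw_def)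
      show "fibre y \<subseteq> \<tau> ` fibre x"
      proof
        fix q assume "q \<in> fibre y"
        then obtain p where p: "p \<in> D" "q = \<tau> p"
          using \<tau> by (auto simp: fibre_def bij_betw_def)
        then have "g (\<phi> p) = g x"
          using \<open>q \<in> fibre y\<close> equivariant g(2) by (simp add: fibre_def)
        then have "\<phi> p = x" using g(1) \<open>p \<in> D\<close> assms(2) by (auto dest: inj_onD)
        then show "q \<in> \<tau> ` fibre x" using p by (auto simp: fibre_def)
      qed
    qed
    moreover have "inj_on \<tau> (fibre x)"
      using \<tau> by (auto simp: fibre_def bij_betw_def intro: inj_on_subset)
    ultimately show ?thesis by (metis card_image)
  qed
  then have "(\<Sum>y\<in>\<phi> ` D. card (fibre y)) = card (\<phi> ` D) * card (fibre x)"
    by simp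
  moreover have "card D = (\<Sum>y\<in>\<phi> ` D. card (fibre y))"
    using sum_fun_comp[OF assms(1) finite_imageI[OF assms(1)] subset_refl, of "\<lambda>_. 1 :: nat"]
    by (simp add: fibre_def)
  ultimately have "card D = card (\<phi> ` D) * card (fibre x)" by simp
  then show ?thesis by simp
qed

lemma wact_append: "wact r (v @ w) = wact r v \<circ> wact r w"
  by (induction v) auto

lemma wact_concat_replicate: "wact r (concat (replicate n w)) = wact r w ^^ n"
  by (induction n) (auto simp: wact_append)

lemma gen_word_iff: "gen_word w \<longleftrightarrow> (\<forall>i\<in>set w. i < 3)"
  by (auto simp: gen_word_def numeral_3_eq_3 less_Suc_eq)

lemma gen_word_concat_replicate: "gen_word w \<Longrightarrow> gen_word (concat (replicate n w))"
  by (induction n) (auto simp: gen_word_def)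

(* The reflection representation of [3,3,3] on (Z/s)^3: rho_1 and rho_2 swap coordinates and
   rho_0 is the affine reflection (a, b, c) \<mapsto> (c + 1, b, a - 1), so that u acts as the
   translation by (1, 0, -1). *)
definition reflection_model :: "int \<Rightarrow> nat \<Rightarrow> int \<times> int \<times> int \<Rightarrow> int \<times> int \<times> int" where
  "reflection_model s i = (\<lambda>(a, b, c).
     if i = 0 then ((c + 1) mod s, b, (a - 1) mod s)
     else if i = 1 then (b, a, c) else (a, c, b))"

definition residue_cube :: "int \<Rightarrow> (int \<times> int \<times> int) set" where
  "residue_cube s = {0..<s} \<times> {0..<s} \<times> {0..<s}"

lemma reflection_model_in_residue_cube:
  "0 < s \<Longrightarrow> p \<in> residue_cube s \<Longrightarrow> reflection_model s i p \<in> residue_cube s"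
  by (cases p) (auto simp: reflection_model_def residue_cube_def)

lemma wact_reflection_model_in_residue_cube:
  "0 < s \<Longrightarrow> p \<in> residue_cube s \<Longrightarrow> wact (reflection_model s) w p \<in> residue_cube s"
  by (induction w) (auto simp: reflection_model_in_residue_cube)

lemma reflection_model_u_power:
  assumes "0 < s" "(a, b, c) \<in> residue_cube s"
  shows "(wact (reflection_model s) u_word ^^ n) (a, b, c) = ((a + int n) mod s, b, (c - int n) mod s)"
proof (induction n)
  case 0
  then show ?case using assms by (simp add: residue_cube_def)
next
  case (Suc n)
  then show ?case
    by (simp add: u_word_def reflection_model_def mod_simps algebra_simps)
qed

lemma wequiv_imp_reflection_model_eq:
  assumes "wequiv s w1 w2" "0 < s" "p \<in> residue_cube (int s)"
  shows "wact (reflection_model (int s)) w1 p = wact (reflection_model (int s)) w2 p"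
  using assms
proof (induction arbitrary: p rule: wequiv.induct)
  case (wcong a b x y)
  then show ?case by (simp add: wact_append wact_reflection_model_in_residue_cube)
next
  case (rel_inv i)
  then show ?case
    by (auto simp: residue_cube_def reflection_model_def less_Suc_eq numeral_3_eq_3 mod_simps)
next
  case (rel_braid i j)
  then show ?case
    by (auto simp: residue_cube_def reflection_model_def less_Suc_eq numeral_3_eq_3 mod_simps)
next
  case rel_s
  then obtain a b c where "p = (a, b, c)" "(a, b, c) \<in> residue_cube (int s)"
    by (cases p) auto
  then show ?case
    using reflection_model_u_power[of "int s" a b c s] rel_s
    unfolding u_word_def[symmetric] wact_concat_replicate by (simp add: residue_cube_def)
qed auto

lemma dvd_if_u_power_wequiv_Nil:
  assumes "0 < s" "wequiv s (concat (replicate n u_word)) []"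
  shows "s dvd n"
proof -
  have "(0, 0, 0) \<in> residue_cube (int s)"
    using assms(1) by (simp add: residue_cube_def)
  from wequiv_imp_reflection_model_eq[OF assms(2,1) this]
  have "int n mod int s = 0"
    using reflection_model_u_power[of "int s" 0 0 0 n] assms(1)
    by (simp add: wact_concat_replicate residue_cube_def)
  then show ?thesis by presburger
qed

locale faithful_toroidal_action =
  fixes s :: nat and X :: "'a set" and r :: "nat \<Rightarrow> 'a \<Rightarrow> 'a"
  assumes faithful: "faithful_action s r X" and s_pos: "0 < s"
begin

lemma r_in_X [simp]: "i < 3 \<Longrightarrow> x \<in> X \<Longrightarrow> r i x \<in> X"
  using faithful unfolding faithful_action_def bij_betw_def by blast

lemma wact_in_X: "gen_word w \<Longrightarrow> x \<in> X \<Longrightarrow> wact r w x \<in> X"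
  by (induction w) (auto simp: gen_word_iff)

lemma wact_eq_if_wequiv:
  "gen_word w1 \<Longrightarrow> gen_word w2 \<Longrightarrow> wequiv s w1 w2 \<Longrightarrow> x \<in> X \<Longrightarrow> wact r w1 x = wact r w2 x"
  using faithful unfolding faithful_action_def by blast

lemma wequiv_Nil_if_acts_trivially:
  assumes "gen_word w" "\<And>x. x \<in> X \<Longrightarrow> wact r w x = x"
  shows "wequiv s w []"
proof -
  have "gen_word []" by (simp add: gen_word_def)
  then have "(\<forall>x\<in>X. wact r w x = wact r [] x) \<longleftrightarrow> wequiv s w []"
    using faithful assms(1) unfolding faithful_action_def by blast
  then show ?thesis using assms(2) by simp
qed

lemma r_involution [simp]: "i < 3 \<Longrightarrow> x \<in> X \<Longrightarrow> r i (r i x) = x"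
  using wact_eq_if_wequiv[of "[i, i]" "[]", OF _ _ rel_inv] by (simp add: gen_word_iff)

lemma r_braid:
  assumes "i < 3" "j < 3" "i \<noteq> j" "x \<in> X"
  shows "r i (r j (r i x)) = r j (r i (r j x))"
  using wact_eq_if_wequiv[of "[i, j, i, j, i, j]" "[]" "r j (r i (r j x))", OF _ _ rel_braid] assms
  by (simp add: gen_word_iff)

lemma wact_rev_cancel: "gen_word w \<Longrightarrow> x \<in> X \<Longrightarrow> wact r (rev w) (wact r w x) = x"
  by (induction w arbitrary: x) (auto simp: gen_word_iff wact_append wact_in_X)

definition U :: "'a \<Rightarrow> 'a" where "U = wact r u_word"
definition V :: "'a \<Rightarrow> 'a" where "V = wact r v_word"

lemma gen_word_u_word: "gen_word u_word" and gen_word_v_word: "gen_word v_word"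
  by (simp_all add: gen_word_def u_word_def v_word_def)

lemma U_in_X [simp]: "x \<in> X \<Longrightarrow> U x \<in> X" and V_in_X [simp]: "x \<in> X \<Longrightarrow> V x \<in> X"
  by (simp_all add: U_def V_def wact_in_X gen_word_u_word gen_word_v_word)

lemma funpow_U_in_X [simp]: "x \<in> X \<Longrightarrow> (U ^^ n) x \<in> X"
  and funpow_V_in_X [simp]: "x \<in> X \<Longrightarrow> (V ^^ n) x \<in> X"
  by (induction n) simp_all

lemma U_V_commute:
  assumes "x \<in> X"
  shows "U (V x) = V (U x)"
proof -
  have "V (U x) = r 1 (r 0 (r 1 (r 2 (r 0 (r 1 (r 2 (r 1 x)))))))"
    by (simp add: U_def V_def u_word_def v_word_def)
  also have "\<dots> = r 0 (r 1 (r 0 (r 2 (r 0 (r 1 (r 2 (r 1 x)))))))"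
    using r_braid[of 1 0] assms by simp
  also have "\<dots> = r 0 (r 1 (r 2 (r 0 (r 2 (r 1 (r 2 (r 1 x)))))))"
    using r_braid[of 0 2] assms by simp
  also have "\<dots> = r 0 (r 1 (r 2 (r 0 (r 1 (r 2 (r 1 (r 1 x)))))))"
    using r_braid[of 2 1 "r 1 x"] assms by simp
  also have "\<dots> = U (V x)"
    using assms by (simp add: U_def V_def u_word_def v_word_def)
  finally show ?thesis by simp
qed

lemma funpow_U_V_commute: "x \<in> X \<Longrightarrow> (U ^^ a) ((V ^^ b) x) = (V ^^ b) ((U ^^ a) x)"
proof -
  have "x \<in> X \<Longrightarrow> (U ^^ a) (V x) = V ((U ^^ a) x)" for x
    by (induction a) (simp_all add: U_V_commute)
  then show "x \<in> X \<Longrightarrow> ?thesis"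
    by (induction b) simp_all
qed

lemma funpow_U_s: "x \<in> X \<Longrightarrow> (U ^^ s) x = x"
  using wact_eq_if_wequiv[OF gen_word_concat_replicate[OF gen_word_u_word] _ rel_s[folded u_word_def]]
  by (simp add: gen_word_iff wact_concat_replicate U_def)

lemma funpow_V_s: "x \<in> X \<Longrightarrow> (V ^^ s) x = x"
proof -
  have "x \<in> X \<Longrightarrow> (V ^^ n) x = r 1 ((U ^^ n) (r 1 x))" for n x
    by (induction n) (simp_all add: U_def V_def u_word_def v_word_def)
  then show "x \<in> X \<Longrightarrow> ?thesis" by (simp add: funpow_U_s)
qed

definition translate :: "nat \<Rightarrow> nat \<Rightarrow> 'a \<Rightarrow> 'a" where
  "translate a b x = (U ^^ a) ((V ^^ b) x)"

lemma translate_in_X [simp]: "x \<in> X \<Longrightarrow> translate a b x \<in> X"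
  by (simp add: translate_def)

lemma U_eq_translate: "U x = translate 1 0 x" and V_eq_translate: "V x = translate 0 1 x"
  by (simp_all add: translate_def)

lemma translate_translate:
  "x \<in> X \<Longrightarrow> translate a b (translate c d x) = translate (a + c) (b + d) x"
  by (simp add: translate_def funpow_add funpow_U_V_commute)

lemma translate_mod: "x \<in> X \<Longrightarrow> translate (a mod s) (b mod s) x = translate a b x"
  by (simp add: translate_def funpow_mod_eq funpow_U_s funpow_V_s)

lemma translate_U: "x \<in> X \<Longrightarrow> translate a b (U x) = U (translate a b x)"
  by (simp add: U_eq_translate translate_translate add.commute)

lemma translate_inverse:
  assumes "x \<in> X"
  shows "translate (s - a mod s) (s - b mod s) (translate a b x) = x"
proof -
  have "(s - a mod s + a) mod s = 0" "(s - b mod s + b) mod s = 0"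
    using dvd_minus_mod_add[OF s_pos] by simp_all
  then have "translate (s - a mod s + a) (s - b mod s + b) x = x"
    using translate_mod[OF assms, of "s - a mod s + a" "s - b mod s + b"] by (simp add: translate_def)
  then show ?thesis by (simp add: assms translate_translate)
qed

lemma inj_on_translate: "inj_on (translate a b) X"
  by (rule inj_on_inverseI[where g = "translate (s - a mod s) (s - b mod s)"]) (rule translate_inverse)

lemma wact_rev_eq_funpow:
  assumes "gen_word w" "x \<in> X" "(wact r w ^^ s) x = x"
  shows "wact r (rev w) x = (wact r w ^^ (s - 1)) x"
proof -
  let ?f = "wact r w"
  have "(?f ^^ n) x \<in> X" for n
    using assms(1,2) by (induction n) (simp_all add: wact_in_X)
  moreover have "?f ((?f ^^ (s - 1)) x) = x"
    using assms(3) s_pos by (metis Suc_diff_1 funpow.simps(2) o_apply)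
  ultimately show ?thesis
    using wact_rev_cancel[OF assms(1)] by metis
qed

lemma wact_rev_u_word: "x \<in> X \<Longrightarrow> wact r (rev u_word) x = translate (s - 1) 0 x"
  using wact_rev_eq_funpow[OF gen_word_u_word _ funpow_U_s[unfolded U_def]]
  by (simp add: translate_def U_def)

lemma wact_rev_v_word: "x \<in> X \<Longrightarrow> wact r (rev v_word) x = translate 0 (s - 1) x"
  using wact_rev_eq_funpow[OF gen_word_v_word _ funpow_V_s[unfolded V_def]]
  by (simp add: translate_def V_def)

lemma T_words_translate:
  assumes "w \<in> T_words" "x \<in> X"
  shows "\<exists>a b. wact r w x = translate a b x"
  using assms(1)
proof induction
  case 1
  have "wact r [] x = translate 0 0 x" by (simp add: translate_def)
  then show ?case by blast
next
  case (2 w)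
  then obtain a b where "wact r w x = translate a b x" by blast
  then have "wact r (u_word @ w) x = translate 1 0 (translate a b x)"
    by (simp add: wact_append U_def[symmetric] U_eq_translate)
  then show ?case using assms(2) translate_translate by metis
next
  case (3 w)
  then obtain a b where "wact r w x = translate a b x" by blast
  then have "wact r (v_word @ w) x = translate 0 1 (translate a b x)"
    by (simp add: wact_append V_def[symmetric] V_eq_translate)
  then show ?case using assms(2) translate_translate by metis
next
  case (4 w)
  then obtain a b where "wact r w x = translate a b x" by blast
  then have "wact r (rev u_word @ w) x = translate (s - 1) 0 (translate a b x)"
    using assms(2) by (simp add: wact_append wact_rev_u_word)
  then show ?case using assms(2) translate_translate by metis
next
  case (5 w)
  then obtain a b where "wact r w x = translate a b x" by blast
  then have "wact r (rev v_word @ w) x = translate 0 (s - 1) (translate a b x)"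
    using assms(2) by (simp add: wact_append wact_rev_v_word)
  then show ?case using assms(2) translate_translate by metis
qed

lemma translate_in_T_orbit: "translate a b x \<in> T_orbit r x"
proof -
  have u_powers: "concat (replicate n u_word) @ w \<in> T_words" if "w \<in> T_words" for n w
    using that by (induction n) (auto intro: T_words.intros)
  have v_powers: "concat (replicate n v_word) @ w \<in> T_words" if "w \<in> T_words" for n w
    using that by (induction n) (auto intro: T_words.intros)
  have "concat (replicate a u_word) @ concat (replicate b v_word) @ [] \<in> T_words"
    by (intro u_powers v_powers T_words.intros)
  moreover have "wact r (concat (replicate a u_word) @ concat (replicate b v_word) @ []) x
      = translate a b x"
    by (simp add: wact_append wact_concat_replicate translate_def U_def V_def)
  ultimately show ?thesis unfolding T_orbit_def by force
qed

lemma T_orbit_eq_translates: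
  assumes "x \<in> X"
  shows "T_orbit r x = (\<lambda>(a, b). translate a b x) ` ({..<s} \<times> {..<s})"
proof (intro equalityI subsetI)
  fix y assume "y \<in> T_orbit r x"
  then obtain a b where "y = translate a b x"
    using T_words_translate[OF _ assms] unfolding T_orbit_def by blast
  then have "y = translate (a mod s) (b mod s) x"
    using translate_mod[OF assms] by simp
  then show "y \<in> (\<lambda>(a, b). translate a b x) ` ({..<s} \<times> {..<s})"
    using s_pos by force
qed (auto intro: translate_in_T_orbit)

lemma card_T_orbit_dvd_square:
  assumes "x \<in> X"
  shows "card (T_orbit r x) dvd s\<^sup>2"
proof -
  let ?D = "{..<s} \<times> {..<s}" and ?\<phi> = "\<lambda>(a, b). translate a b x"
  have "card (?\<phi> ` ?D) dvd card ?D"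
  proof (rule card_equivariant_image_dvd)
    show "finite ?D" by simp
    show "x \<in> ?\<phi> ` ?D"
      using s_pos by (intro image_eqI[of _ _ "(0, 0)"]) (simp_all add: translate_def)
  next
    fix y assume "y \<in> ?\<phi> ` ?D"
    then obtain a0 b0 where y: "y = translate a0 b0 x" by auto
    let ?\<tau> = "map_prod (\<lambda>a. (a + a0) mod s) (\<lambda>b. (b + b0) mod s)"
    have "bij_betw ?\<tau> ?D ?D"
      by (intro bij_betw_map_prod bij_betw_add_mod s_pos)
    moreover have "inj_on (translate a0 b0) (?\<phi> ` ?D)"
      using assms by (auto intro: inj_on_subset[OF inj_on_translate])
    moreover have "\<forall>p\<in>?D. ?\<phi> (?\<tau> p) = translate a0 b0 (?\<phi> p)"
      using assms by (auto simp: translate_mod translate_translate add.commute)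
    ultimately show "\<exists>\<tau> g. bij_betw \<tau> ?D ?D \<and> inj_on g (?\<phi> ` ?D) \<and> g x = y \<and>
        (\<forall>p\<in>?D. ?\<phi> (\<tau> p) = g (?\<phi> p))"
      using y by blast
  qed
  then show ?thesis by (simp add: T_orbit_eq_translates[OF assms] power2_eq_square)
qed

lemma self_in_orbit_U: "x \<in> X \<Longrightarrow> x \<in> orbit U x"
  using funpow_U_s s_pos by (force simp: orbit_altdef)

lemma funpow_U_card_T_orbit:
  assumes "x \<in> X"
  shows "(U ^^ card (T_orbit r x)) x = x"
proof -
  let ?O = "T_orbit r x"
  have O_X: "?O \<subseteq> X"
    using assms by (auto simp: T_orbit_eq_translates)
  have "card (orbit U x) dvd card ?O"
  proof (rule card_orbit_dvd_card)
    show "finite ?O" by (simp add: T_orbit_eq_translates[OF assms])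
    show "U ` ?O \<subseteq> ?O"
    proof
      fix z assume "z \<in> U ` ?O"
      then obtain a b where "z = translate 1 0 (translate a b x)"
        by (auto simp: T_orbit_eq_translates[OF assms] U_eq_translate)
      then show "z \<in> ?O"
        by (simp add: assms translate_translate translate_in_T_orbit)
    qed
    show "y \<in> orbit U y" if "y \<in> ?O" for y
      using that O_X by (auto intro: self_in_orbit_U)
    show "x \<in> ?O"
      using translate_in_T_orbit[of 0 0 x] by (simp add: translate_def)
  next
    fix y z assume "y \<in> ?O" "z \<in> ?O"
    then obtain a b c d where yz: "y = translate c d x" "z = translate a b x" "c < s" "d < s"
      by (auto simp: T_orbit_eq_translates[OF assms])
    let ?g = "translate (a + (s - c)) (b + (s - d))"
    have "?g y = translate (a + s) (b + s) x"
      using assms yz by (simp add: translate_translate)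
    also have "\<dots> = z"
      using translate_mod[OF assms, of "a + s" "b + s"] translate_mod[OF assms, of a b] yz by simp
    finally show "\<exists>g. g y = z \<and> (\<forall>w\<in>?O. g (U w) = U (g w))"
      using O_X translate_U by blast
  qed
  moreover have "(U ^^ card (orbit U x)) x = x"
    by (rule funpow_card_orbit[OF self_in_orbit_U[OF assms]])
  ultimately show ?thesis
    by (metis dvd_imp_mod_0 funpow_0 funpow_mod_eq)
qed

lemma dvd_card_T_orbit:
  assumes "\<forall>x\<in>X. card (T_orbit r x) = k"
  shows "s dvd k"
proof -
  have "(U ^^ (k mod s)) x = x" if "x \<in> X" for x
    using funpow_mod_eq[where f = U and n = s and m = k] funpow_U_s[OF that]
      funpow_U_card_T_orbit[OF that] assms that
    by simp
  then have "wequiv s (concat (replicate (k mod s) u_word)) []"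
    by (intro wequiv_Nil_if_acts_trivially gen_word_concat_replicate gen_word_u_word)
      (simp add: wact_concat_replicate U_def)
  then have "s dvd k mod s"
    by (rule dvd_if_u_power_wequiv_Nil[OF s_pos])
  then have "k mod s = 0"
    using s_pos by (meson mod_less_divisor nat_dvd_not_less neq0_conv)
  then show ?thesis by presburger
qed

end

theorem mainTheorem10:
  fixes s n k :: nat and X :: "'a set" and r :: "nat \<Rightarrow> 'a \<Rightarrow> 'a"
  assumes "s \<ge> 2"
    and "finite X" and "card X = n"
    and "faithful_action s r X"
    and "transitive_action r X"
    and "card (T_orbit r ` X) = 3"
    and "\<forall>x\<in>X. card (T_orbit r x) = k"
  shows "\<exists>d. d > 0 \<and> d dvd s \<and> k = d * s"
proof -
  interpret faithful_toroidal_action s X r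
    using assms(1,4) by unfold_locales simp_all
  obtain x where x: "x \<in> X"
    using assms(6) by fastforce
  have "x \<in> T_orbit r x" "finite (T_orbit r x)"
    using translate_in_T_orbit[of 0 0 x] by (simp_all add: translate_def T_orbit_eq_translates[OF x])
  then have "0 < card (T_orbit r x)"
    by (auto simp: card_gt_0_iff)
  then have "0 < k"
    using assms(7) x by simp
  obtain d where d: "k = s * d"
    using dvd_card_T_orbit[OF assms(7)] by blast
  have "s * d dvd s * s"
    using card_T_orbit_dvd_square[OF x] assms(7) x d by (simp add: power2_eq_square)
  then have "d dvd s"
    using s_pos by simp
  moreover have "0 < d"
    using \<open>0 < k\<close> d by simp
  ultimately show ?thesis
    using d by (metis mult.commute)
qed

end
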